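(* The subgroup $E$ is $S_0$-invariant, and every proper $S_0$-invariant subgroup of $G$ is contained in $E$; thus $E$ is the unique maximal proper $S_0$-invariant subgroup of $G$. Moreover, if $H$ is a proper $S_0$-invariant subgroup of $E$, then in the reduced word of every element of $H$ each letter $a_i$ occurs either not at all or at least twice.
   Context: Let $G=\mathbb Z_2^{*\infty}$ be the free product of countably many copies of $\mathbb Z_2=\mathbb Z/2\mathbb Z$, with canonical generators $a_1,a_2,\dots$ ($a_i^2=e$). Every element has a unique reduced word in the $a_i$ (no two consecutive equal letters). $E\le G$ is the subgroup of all elements whose reduced word has even length. $S_0\subseteq\mathrm{End}(G)$ is the subsemigroup generated by: (1) for every $n\in\mathbb N$ and every choice of indices $i(1),\dots,i(n)$, the endomorphism with $a_k\mapsto a_{i(k)}$ for $1\le k\le n$ and $a_k\mapsto a_k$ for $k>n$ ("finite identification of letters"); (2) for every $k$, the conjugation $w\mapsto a_kwa_k$. A subgroup $H\le G$ is $S_0$-invariant if $\phi(H)\subseteq H$ for all $\phi\in S_0$. *)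

theory Defs
  imports "HOL-Algebra.Group"
begin

text \<open>Elements of G = free product of countably many copies of Z/2 are represented by
  their reduced words: lists of letter indices (natural numbers; letter k stands for a_k)
  with no two consecutive equal letters.\<close>

definition reduced :: "nat list \<Rightarrow> bool" where
  "reduced w \<longleftrightarrow> successively (\<noteq>) w"

definition cons_red :: "nat \<Rightarrow> nat list \<Rightarrow> nat list" where
  "cons_red a w = (case w of [] \<Rightarrow> [a] | b # w' \<Rightarrow> (if a = b then w' else a # w))"

definition wmul :: "nat list \<Rightarrow> nat list \<Rightarrow> nat list" where
  "wmul xs ys = foldr cons_red xs ys"

definition FG :: "nat list monoid" where
  "FG = \<lparr> carrier = {w. reduced w}, mult = wmul, one = [] \<rparr>"

definition subst_endo :: "(nat \<Rightarrow> nat) \<Rightarrow> nat list \<Rightarrow> nat list" where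
  "subst_endo \<sigma> w = foldr (\<lambda>a v. cons_red (\<sigma> a) v) w []"

definition conj_endo :: "nat \<Rightarrow> nat list \<Rightarrow> nat list" where
  "conj_endo k w = wmul [k] (wmul w [k])"

inductive_set S0 :: "(nat list \<Rightarrow> nat list) set" where
  ident: "(\<And>k. n \<le> k \<Longrightarrow> \<sigma> k = k) \<Longrightarrow> subst_endo \<sigma> \<in> S0"
| conj: "conj_endo k \<in> S0"
| comp: "\<phi> \<in> S0 \<Longrightarrow> \<psi> \<in> S0 \<Longrightarrow> \<phi> \<circ> \<psi> \<in> S0"

definition S0_invariant :: "nat list set \<Rightarrow> bool" where
  "S0_invariant H \<longleftrightarrow> (\<forall>\<phi>\<in>S0. \<phi> ` H \<subseteq> H)"

definition E :: "nat list set" where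
  "E = {w \<in> carrier FG. even (length w)}"

end

theory Submission
  imports Defs
begin

(* Reduced words under wmul form a group FG (the free product of copies of Z/2),
   and a word's length parity is additive under wmul and preserved by every letter
   substitution; hence E is a subgroup, and it is invariant under S0.
   The other two claims rest on a collapse phenomenon: if a letter substitution sends all
   letters of a word u to one letter j, then u is sent to [] or [j] according to the parity
   of length u.  Letter substitutions with finite support lie in S0, since they fix all
   letters beyond some bound.  Consequently:
   - an invariant subgroup containing a word of odd length contains every letter [i], hence
     is all of FG; so a proper invariant subgroup is contained in E;
   - if an invariant subgroup H contains a word of even length in which some letter i occurs
     exactly once, collapsing all other letters to a letter j distinct from i yields [i,j] or
     [j,i] in H; renaming letters then gives all [k,l] with k distinct from l, and these
     generate E, so H contains E. *)

lemma reduced_Nil [simp]: "reduced []"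
  and reduced_single [simp]: "reduced [a]"
  by (simp_all add: reduced_def)

lemma reduced_Cons_Cons [simp]: "reduced (a # b # w) \<longleftrightarrow> a \<noteq> b \<and> reduced (b # w)"
  by (simp add: reduced_def)

lemma reduced_ConsD: "reduced (a # w) \<Longrightarrow> reduced w"
  by (cases w) auto

lemma reduced_rev: "reduced w \<Longrightarrow> reduced (rev w)"
  by (simp add: reduced_def) (metis (mono_tags, lifting) successively_mono)

lemma cons_red_reduced: "reduced v \<Longrightarrow> reduced (cons_red a v)"
  by (cases v) (auto simp: cons_red_def intro: reduced_ConsD)

lemma cons_red_cancel:
  assumes "reduced v"
  shows "cons_red a (cons_red a v) = v"
proof (cases v)
  case (Cons b v')
  with assms show ?thesis by (cases v') (auto simp: cons_red_def)
qed (simp add: cons_red_def)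

lemma wmul_Nil: "wmul [] y = y"
  and wmul_Cons: "wmul (a # x) y = cons_red a (wmul x y)"
  by (simp_all add: wmul_def)

lemma wmul_reduced: "reduced y \<Longrightarrow> reduced (wmul x y)"
  by (induction x) (auto simp: wmul_Nil wmul_Cons intro: cons_red_reduced)

lemma wmul_cons_red:
  assumes z: "reduced z"
  shows "wmul (cons_red a w) z = cons_red a (wmul w z)"
proof (cases w)
  case (Cons b w')
  then show ?thesis
    using cons_red_cancel[OF wmul_reduced[OF z, of w'], of a]
    by (auto simp: cons_red_def wmul_Cons)
qed (simp add: cons_red_def wmul_Nil wmul_Cons)

lemma wmul_assoc: "reduced z \<Longrightarrow> wmul (wmul x y) z = wmul x (wmul y z)"
  by (induction x) (simp_all add: wmul_Nil wmul_Cons wmul_cons_red)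

text \<open>The reversed word is a left inverse, since each letter is its own inverse.\<close>
lemma wmul_rev_self: "reduced x \<Longrightarrow> wmul (rev x) x = []"
proof (induction x)
  case (Cons a x)
  have "wmul (rev (a # x)) (a # x) = wmul (rev x) (cons_red a (a # x))"
    by (simp add: wmul_def)
  also have "\<dots> = wmul (rev x) x" by (simp add: cons_red_def)
  finally show ?case using Cons reduced_ConsD by auto
qed (simp add: wmul_Nil)

lemma wmul_append_reduced: "reduced (x @ y) \<Longrightarrow> wmul x y = x @ y"
proof (induction x)
  case (Cons a x)
  then have "wmul x y = x @ y" by (auto intro: reduced_ConsD)
  with Cons.prems show ?case
    by (cases "x @ y") (auto simp: wmul_Cons cons_red_def)
qed (simp add: wmul_Nil)

theorem group_FG: "group FG"
proof (rule groupI)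
  fix x assume "x \<in> carrier FG"
  then show "\<exists>y\<in>carrier FG. y \<otimes>\<^bsub>FG\<^esub> x = \<one>\<^bsub>FG\<^esub>"
    using reduced_rev wmul_rev_self by (auto simp: FG_def)
qed (auto simp: FG_def wmul_reduced wmul_assoc wmul_Nil)

lemma FG_simps [simp]: "carrier FG = {w. reduced w}" "mult FG = wmul" "one FG = []"
  by (simp_all add: FG_def)

lemma even_length_cons_red: "even (length (cons_red a v)) \<longleftrightarrow> odd (length v)"
  by (cases v) (auto simp: cons_red_def)

lemma even_length_wmul: "even (length (wmul x y)) \<longleftrightarrow> even (length x + length y)"
  by (induction x) (auto simp: wmul_Nil wmul_Cons even_length_cons_red)

lemma E_subgroup: "subgroup E FG"
proof (rule group.subgroupI[OF group_FG])
  show "E \<subseteq> carrier FG" "E \<noteq> {}"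
    by (auto simp: E_def intro!: exI[of _ "[]"])
next
  fix a assume a: "a \<in> E"
  then have "a \<in> carrier FG" by (simp add: E_def)
  then have "inv\<^bsub>FG\<^esub> a \<in> carrier FG" and "wmul a (inv\<^bsub>FG\<^esub> a) = []"
    using group.inv_closed group.r_inv group_FG by fastforce+
  then show "inv\<^bsub>FG\<^esub> a \<in> E"
    using a even_length_wmul[of a "inv\<^bsub>FG\<^esub> a"] by (auto simp: E_def)
next
  fix a b assume "a \<in> E" "b \<in> E"
  then show "a \<otimes>\<^bsub>FG\<^esub> b \<in> E" by (auto simp: E_def wmul_reduced even_length_wmul)
qed

lemma subst_endo_Nil: "subst_endo \<sigma> [] = []"
  and subst_endo_Cons: "subst_endo \<sigma> (a # w) = cons_red (\<sigma> a) (subst_endo \<sigma> w)"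
  by (simp_all add: subst_endo_def)

lemma subst_endo_reduced: "reduced (subst_endo \<sigma> w)"
  by (induction w) (auto simp: subst_endo_Nil subst_endo_Cons intro: cons_red_reduced)

lemma even_length_subst_endo: "even (length (subst_endo \<sigma> w)) \<longleftrightarrow> even (length w)"
  by (induction w) (auto simp: subst_endo_Nil subst_endo_Cons even_length_cons_red)

lemma subst_endo_append:
  "subst_endo \<sigma> (u @ v) = wmul (subst_endo \<sigma> u) (subst_endo \<sigma> v)"
  by (induction u)
    (simp_all add: subst_endo_Nil subst_endo_Cons wmul_Nil wmul_cons_red subst_endo_reduced)

lemma subst_endo_collapse:
  assumes "\<forall>a\<in>set u. \<sigma> a = j"
  shows "subst_endo \<sigma> u = (if even (length u) then [] else [j])"
  using assms by (induction u) (auto simp: subst_endo_Nil subst_endo_Cons cons_red_def)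

lemma finite_subst_in_S0:
  assumes "finite {x. \<sigma> x \<noteq> x}"
  shows "subst_endo \<sigma> \<in> S0"
proof -
  obtain n where "\<forall>x\<in>{x. \<sigma> x \<noteq> x}. x < n"
    using assms finite_nat_set_iff_bounded by blast
  then show ?thesis by (intro S0.ident[of n]) force
qed

lemma S0_invariant_E: "S0_invariant E"
proof -
  have "\<forall>w\<in>E. \<phi> w \<in> E" if "\<phi> \<in> S0" for \<phi>
    using that
  proof (induction rule: S0.induct)
    case (ident n \<sigma>)
    then show ?case by (auto simp: E_def subst_endo_reduced even_length_subst_endo)
  next
    case (conj k)
    then show ?case by (auto simp: E_def conj_endo_def wmul_reduced even_length_wmul)
  qed auto
  then show ?thesis unfolding S0_invariant_def by blast
qed

lemma subgroup_containing_letters: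
  assumes H: "subgroup H FG" and letters: "\<And>i. [i] \<in> H"
  shows "carrier FG \<subseteq> H"
proof
  fix w assume "w \<in> carrier FG"
  then have "reduced w" by simp
  then show "w \<in> H"
  proof (induction w)
    case Nil
    then show ?case using subgroup.one_closed[OF H] by simp
  next
    case (Cons a w)
    then have "[a] \<otimes>\<^bsub>FG\<^esub> w \<in> H"
      using subgroup.m_closed[OF H letters] reduced_ConsD by blast
    with Cons.prems show ?case by (simp add: wmul_append_reduced)
  qed
qed

lemma subgroup_containing_pairs:
  assumes H: "subgroup H FG" and pairs: "\<And>k l. k \<noteq> l \<Longrightarrow> [k, l] \<in> H"
  shows "E \<subseteq> H"
proof
  fix w assume "w \<in> E"
  then have "reduced w" "even (length w)" by (auto simp: E_def)
  then show "w \<in> H"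
  proof (induction w rule: induct_list012)
    case 1
    then show ?case using subgroup.one_closed[OF H] by simp
  next
    case (3 x y zs)
    then have "[x, y] \<otimes>\<^bsub>FG\<^esub> zs \<in> H"
      using subgroup.m_closed[OF H pairs] reduced_ConsD by auto
    with "3.prems" show ?case by (simp add: wmul_append_reduced)
  qed simp
qed

lemma odd_word_gives_letter:
  assumes inv: "S0_invariant H" and w: "w \<in> H" "odd (length w)"
  shows "[i] \<in> H"
proof -
  define \<sigma> where "\<sigma> x = (if x \<in> set w then i else x)" for x
  have "subst_endo \<sigma> \<in> S0"
    by (rule finite_subst_in_S0, rule finite_subset[of _ "set w"]) (auto simp: \<sigma>_def)
  then have "subst_endo \<sigma> w \<in> H" using inv w unfolding S0_invariant_def by blast
  moreover have "subst_endo \<sigma> w = [i]"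
    using subst_endo_collapse[of w \<sigma> i] w by (simp add: \<sigma>_def)
  ultimately show ?thesis by simp
qed

lemma pair_gives_all_pairs:
  assumes inv: "S0_invariant H" and ab: "a \<noteq> b" "[a, b] \<in> H" and kl: "k \<noteq> l"
  shows "[k, l] \<in> H"
proof -
  define \<tau> where "\<tau> x = (if x = a then k else if x = b then l else x)" for x
  have "subst_endo \<tau> \<in> S0"
    by (rule finite_subst_in_S0, rule finite_subset[of _ "{a, b}"]) (auto simp: \<tau>_def)
  then have "subst_endo \<tau> [a, b] \<in> H" using inv ab unfolding S0_invariant_def by blast
  with ab kl show ?thesis by (simp add: \<tau>_def subst_endo_def cons_red_def)
qed

text \<open>Collapsing all letters other than a letter i that occurs exactly once in a word of
  even length leaves [i,j] or [j,i].\<close>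
lemma single_occurrence_gives_pair:
  assumes inv: "S0_invariant H" and w: "w \<in> H" "even (length w)"
    and once: "count_list w i = 1"
  shows "\<exists>a b. a \<noteq> b \<and> [a, b] \<in> H"
proof -
  have "i \<in> set w" using once count_list_0_iff[of w i] by auto
  then obtain u v where split: "w = u @ i # v" and "i \<notin> set u"
    using split_list_first by metis
  have "i \<notin> set v" using once split \<open>i \<notin> set u\<close> count_list_0_iff by fastforce
  define j where "j = Suc i"
  define \<sigma> where "\<sigma> x = (if x \<in> set w \<and> x \<noteq> i then j else x)" for x
  have "subst_endo \<sigma> \<in> S0"
    by (rule finite_subst_in_S0, rule finite_subset[of _ "set w"]) (auto simp: \<sigma>_def)
  then have image_in_H: "subst_endo \<sigma> w \<in> H" using inv w unfolding S0_invariant_def by blast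
  have "subst_endo \<sigma> u = (if even (length u) then [] else [j])"
    "subst_endo \<sigma> v = (if even (length v) then [] else [j])"
    using subst_endo_collapse split \<open>i \<notin> set u\<close> \<open>i \<notin> set v\<close> by (auto simp: \<sigma>_def)
  then have "subst_endo \<sigma> w = (if even (length u) then [i, j] else [j, i])"
    using split w(2) by (auto simp: subst_endo_append subst_endo_Cons subst_endo_Nil
        \<sigma>_def j_def wmul_def cons_red_def)
  with image_in_H show ?thesis by (metis j_def n_not_Suc_n)
qed

lemma proper_invariant_subgroup_le_E:
  assumes H: "subgroup H FG" and proper: "H \<noteq> carrier FG" and inv: "S0_invariant H"
  shows "H \<subseteq> E"
proof
  fix w assume w: "w \<in> H"
  have "even (length w)"
    using subgroup_containing_letters[OF H odd_word_gives_letter[OF inv w]]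
      subgroup.subset[OF H] proper by blast
  with w subgroup.subset[OF H] show "w \<in> E" by (auto simp: E_def)
qed

lemma proper_invariant_subgroup_of_E_no_single_letter:
  assumes H: "subgroup H FG" and sub: "H \<subseteq> E" and proper: "H \<noteq> E"
    and inv: "S0_invariant H" and w: "w \<in> H"
  shows "count_list w i \<noteq> 1"
proof
  assume "count_list w i = 1"
  moreover have "even (length w)" using w sub by (auto simp: E_def)
  ultimately obtain a b where ab: "a \<noteq> b" "[a, b] \<in> H"
    using single_occurrence_gives_pair[OF inv w] by blast
  have "E \<subseteq> H"
    using subgroup_containing_pairs[OF H pair_gives_all_pairs[OF inv ab]] .
  with sub proper show False by blast
qed

theorem mainTheorem6:
  shows "subgroup E FG \<and> E \<noteq> carrier FG \<and> S0_invariant E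
    \<and> (\<forall>H. subgroup H FG \<and> H \<noteq> carrier FG \<and> S0_invariant H \<longrightarrow> H \<subseteq> E)
    \<and> (\<forall>H. subgroup H FG \<and> H \<subseteq> E \<and> H \<noteq> E \<and> S0_invariant H \<longrightarrow>
          (\<forall>w\<in>H. \<forall>i. count_list w i \<noteq> 1))"
proof -
  have "[0] \<in> carrier FG" "[0] \<notin> E" by (auto simp: E_def)
  then have "E \<noteq> carrier FG" by blast
  then show ?thesis
    using E_subgroup S0_invariant_E proper_invariant_subgroup_le_E
      proper_invariant_subgroup_of_E_no_single_letter by blast
qed

end
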